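(* In the setting below, let $\sigma,\tau>0$ satisfy $\sigma\tau\|A\|^2+\tau L\le1$ and let $(x^{(k)},z^{(k)})$ be generated either by the Bregman primal Condat--V\~u algorithm \[x^{(k+1)}=\mathrm{prox}^{\phi_{\mathrm p}}_{\tau f}\big(x^{(k)},\tau A^Tz^{(k)}+\tau\nabla h(x^{(k)})\big),\quad z^{(k+1)}=\mathrm{prox}^{\phi_{\mathrm d}}_{\sigma g^*}\big(z^{(k)},-\sigma A(2x^{(k+1)}-x^{(k)})\big),\] or by the Bregman dual Condat--V\~u algorithm \[z^{(k+1)}=\mathrm{prox}^{\phi_{\mathrm d}}_{\sigma g^*}\big(z^{(k)},-\sigma Ax^{(k)}\big),\quad x^{(k+1)}=\mathrm{prox}^{\phi_{\mathrm p}}_{\tau f}\big(x^{(k)},\tau A^T(2z^{(k+1)}-z^{(k)})+\tau\nabla h(x^{(k)})\big),\] starting from $x^{(0)}\in\operatorname{int}(\operatorname{dom}\phi_{\mathrm p})\cap\operatorname{dom} h$, $z^{(0)}\in\operatorname{int}(\operatorname{dom}\phi_{\mathrm d})$. Let $x^{(k)}_{\mathrm{avg}}=\frac1k\sum_{i=1}^kx^{(i)}$, $z^{(k)}_{\mathrm{avg}}=\frac1k\sum_{i=1}^kz^{(i)}$ for $k\ge1$. Then for all $k\ge1$, all $x\in\operatorname{dom} f\cap\operatorname{dom}\phi_{\mathrm p}$ and all $z\in\operatorname{dom} g^*\cap\operatorname{dom}\phi_{\mathrm d}$, \[\mathcal L(x^{(k)}_{\mathrm{avg}},z)-\mathcal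 L(x,z^{(k)}_{\mathrm{avg}})\le\frac2k\Big(\frac1\tau d_{\mathrm p}(x,x^{(0)})+\frac1\sigma d_{\mathrm d}(z,z^{(0)})\Big).\]
   Context: Setting: $f:\mathbb R^n\to\mathbb R\cup\{+\infty\}$, $g:\mathbb R^m\to\mathbb R\cup\{+\infty\}$, $h$ are closed convex functions, $h$ differentiable on its open convex domain, $f+h$ and $g$ proper, $A\in\mathbb R^{m\times n}$; $g^*$ is the conjugate of $g$. Lagrangian: $\mathcal L(x,z)=f(x)+h(x)+\langle z,Ax\rangle-g^*(z)$ (value $+\infty$ if $x\notin\operatorname{dom}(f+h)$, $-\infty$ if $x\in\operatorname{dom}(f+h)$, $z\notin\operatorname{dom}g^*$). A Bregman kernel $\phi$ is convex with $\operatorname{int}(\operatorname{dom}\phi)\neq\emptyset$, continuous on $\operatorname{dom}\phi$, continuously differentiable on $\operatorname{int}(\operatorname{dom}\phi)$; its distance is $d(x,y)=\phi(x)-\phi(y)-\langle\nabla\phi(y),x-y\rangle$ on $\operatorname{dom}\phi\times\operatorname{int}(\operatorname{dom}\phi)$, and $\mathrm{prox}^\phi_F(y,a)=\operatorname{argmin}_x\big(F(x)+\langle a,x\rangle+d(x,y)\big)$, assumed for every $a$ and $y\in\operatorname{int}(\operatorname{dom}\phi)$ to be a unique point of $\operatorname{int}(\operatorname{dom}\phi)$. Kernels $\phi_{\mathrm p}$ on $\mathbb R^n$, $\phi_{\mathrm d}$ on $\mathbb R^m$ have distances $d_{\mathrm p},d_{\mathrm d}$ with $d_{\mathrm p}(x,x')\ge\frac12\|x-x'\|_{\mathrm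 p}^2$, $d_{\mathrm d}(z,z')\ge\frac12\|z-z'\|_{\mathrm d}^2$ for norms $\|\cdot\|_{\mathrm p},\|\cdot\|_{\mathrm d}$. Also $\operatorname{dom}\phi_{\mathrm p}\subseteq\operatorname{dom}h$ and $h(x)-h(x')-\langle\nabla h(x'),x-x'\rangle\le L\,d_{\mathrm p}(x,x')$ for all $(x,x')\in\operatorname{dom}d_{\mathrm p}$, for some $L>0$. $\|A\|=\sup_{u\ne0,v\ne0}\langle v,Au\rangle/(\|v\|_{\mathrm d}\|u\|_{\mathrm p})$. The optimality conditions $0\in\partial f(x)+\nabla h(x)+A^Tz$, $0\in\partial g^*(z)-Ax$ have a solution $(x^\star,z^\star)\in\operatorname{dom}\phi_{\mathrm p}\times\operatorname{dom}\phi_{\mathrm d}$. *)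

theory Defs
  imports "HOL-Analysis.Analysis"
begin

definition edom :: "('a \<Rightarrow> ereal) \<Rightarrow> 'a set" where
  "edom F = {x. F x < \<infinity>}"

definition proper_fun :: "('a \<Rightarrow> ereal) \<Rightarrow> bool" where
  "proper_fun F \<longleftrightarrow> (\<forall>x. F x \<noteq> -\<infinity>) \<and> edom F \<noteq> {}"

definition convex_fun :: "('a::real_vector \<Rightarrow> ereal) \<Rightarrow> bool" where
  "convex_fun F \<longleftrightarrow> convex {(x, r::real). F x \<le> ereal r}"

definition closed_fun :: "('a::topological_space \<Rightarrow> ereal) \<Rightarrow> bool" where
  "closed_fun F \<longleftrightarrow> closed {(x, r::real). F x \<le> ereal r}"

definition conjugate :: "('a::real_inner \<Rightarrow> ereal) \<Rightarrow> 'a \<Rightarrow> ereal" where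
  "conjugate g z = (SUP y. ereal (z \<bullet> y) - g y)"

definition subdiff :: "('a::real_inner \<Rightarrow> ereal) \<Rightarrow> 'a \<Rightarrow> 'a set" where
  "subdiff F x = {s. F x < \<infinity> \<and> (\<forall>y. F x + ereal (s \<bullet> (y - x)) \<le> F y)}"

definition bregman_kernel :: "('a::euclidean_space \<Rightarrow> ereal) \<Rightarrow> ('a \<Rightarrow> 'a) \<Rightarrow> bool" where
  "bregman_kernel phi gphi \<longleftrightarrow>
     convex_fun phi \<and> (\<forall>x. phi x \<noteq> -\<infinity>) \<and> interior (edom phi) \<noteq> {} \<and>
     continuous_on (edom phi) phi \<and>
     (\<forall>x\<in>interior (edom phi).
        ((\<lambda>y. real_of_ereal (phi y)) has_derivative (\<lambda>v. gphi x \<bullet> v)) (at x)) \<and>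
     continuous_on (interior (edom phi)) gphi"

text \<open>Bregman distance d(x,y), meaningful for x in dom phi, y in int dom phi.\<close>
definition bdist :: "('a::real_inner \<Rightarrow> ereal) \<Rightarrow> ('a \<Rightarrow> 'a) \<Rightarrow> 'a \<Rightarrow> 'a \<Rightarrow> real" where
  "bdist phi gphi x y = real_of_ereal (phi x) - real_of_ereal (phi y) - gphi y \<bullet> (x - y)"

definition prox_obj :: "('a::real_inner \<Rightarrow> ereal) \<Rightarrow> ('a \<Rightarrow> ereal) \<Rightarrow> ('a \<Rightarrow> 'a) \<Rightarrow> 'a \<Rightarrow> 'a \<Rightarrow> 'a \<Rightarrow> ereal" where
  "prox_obj F phi gphi y a x =
     (if x \<in> edom phi then F x + ereal (a \<bullet> x + bdist phi gphi x y) else \<infinity>)"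

definition prox_argmin :: "('a::real_inner \<Rightarrow> ereal) \<Rightarrow> ('a \<Rightarrow> ereal) \<Rightarrow> ('a \<Rightarrow> 'a) \<Rightarrow> 'a \<Rightarrow> 'a \<Rightarrow> 'a set" where
  "prox_argmin F phi gphi y a = {x. \<forall>x'. prox_obj F phi gphi y a x \<le> prox_obj F phi gphi y a x'}"

definition bprox :: "('a::real_inner \<Rightarrow> ereal) \<Rightarrow> ('a \<Rightarrow> ereal) \<Rightarrow> ('a \<Rightarrow> 'a) \<Rightarrow> 'a \<Rightarrow> 'a \<Rightarrow> 'a" where
  "bprox F phi gphi y a = (THE p. p \<in> prox_argmin F phi gphi y a)"

definition prox_wellposed :: "('a::real_inner \<Rightarrow> ereal) \<Rightarrow> ('a \<Rightarrow> ereal) \<Rightarrow> ('a \<Rightarrow> 'a) \<Rightarrow> bool" where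
  "prox_wellposed F phi gphi \<longleftrightarrow>
     (\<forall>a. \<forall>y\<in>interior (edom phi). \<exists>p\<in>interior (edom phi). prox_argmin F phi gphi y a = {p})"

definition is_norm :: "('a::real_vector \<Rightarrow> real) \<Rightarrow> bool" where
  "is_norm N \<longleftrightarrow> (\<forall>x y. N (x + y) \<le> N x + N y) \<and> (\<forall>c x. N (c *\<^sub>R x) = \<bar>c\<bar> * N x)
                 \<and> (\<forall>x. N x = 0 \<longleftrightarrow> x = 0)"

definition op_norm :: "(real^'n \<Rightarrow> real) \<Rightarrow> (real^'m \<Rightarrow> real) \<Rightarrow> real^'n^'m \<Rightarrow> real" where
  "op_norm np nd A = Sup {(v \<bullet> (A *v u)) / (nd v * np u) | u v. u \<noteq> 0 \<and> v \<noteq> 0}"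

definition lagrangian :: "(real^'n \<Rightarrow> ereal) \<Rightarrow> (real^'n \<Rightarrow> ereal) \<Rightarrow> (real^'m \<Rightarrow> ereal)
     \<Rightarrow> real^'n^'m \<Rightarrow> real^'n \<Rightarrow> real^'m \<Rightarrow> ereal" where
  "lagrangian f h g A x z =
     (if x \<notin> edom (\<lambda>y. f y + h y) then \<infinity>
      else if z \<notin> edom (conjugate g) then -\<infinity>
      else f x + h x + ereal (z \<bullet> (A *v x)) - conjugate g z)"

end

theory Submission
  imports Defs
begin

(* Each iteration consists of two Bregman proximal steps. Their three-point inequalities,
   together with relative smoothness and convexity of h, bound the Lagrangian gap
   L(x_{j+1}, z) - L(x, z_{j+1}) by the decrease E_j - E_{j+1} of the energy
   E_j = d_p(x, x_j) / tau + d_d(z, z_j) / sigma, plus the change of the coupling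
   P_j = (z_j - z)^T A (x_j - x) (with sign +1 for the primal and -1 for the dual algorithm)
   and a cross term (z_{j+1} - z_j)^T A (x_{j+1} - x_j). Strong convexity of the kernels and
   the step-size condition sigma tau ||A||^2 + tau L <= 1 let the Bregman distances
   d_p(x_{j+1}, x_j), d_d(z_{j+1}, z_j) left over from the three-point inequalities absorb the
   cross term. Telescoping and |P_j| <= E_j bound the sum of the first k gaps by 2 E_0, and
   convexity of L in x and concavity in z carry this over to the averaged iterates. *)

lemma convex_fun_le_combination:
  fixes F :: "'a::real_vector \<Rightarrow> ereal"
  assumes "convex_fun F" "F p \<le> ereal a" "F u \<le> ereal b" "0 \<le> t" "t \<le> 1"
  shows "F ((1 - t) *\<^sub>R p + t *\<^sub>R u) \<le> ereal ((1 - t) * a + t * b)"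
proof -
  have "(1 - t) *\<^sub>R (p, a) + t *\<^sub>R (u, b) \<in> {(x, r::real). F x \<le> ereal r}"
    using assms by (intro convexD[OF assms(1)[unfolded convex_fun_def]]) auto
  then show ?thesis by simp
qed

lemma convex_fun_le_sum:
  fixes F :: "'a::real_vector \<Rightarrow> ereal"
  assumes "convex_fun F" "finite I" "sum w I = 1" "\<And>i. i \<in> I \<Longrightarrow> 0 \<le> w i"
    and "\<And>i. i \<in> I \<Longrightarrow> F (y i) \<le> ereal (c i)"
  shows "F (\<Sum>i\<in>I. w i *\<^sub>R y i) \<le> ereal (\<Sum>i\<in>I. w i * c i)"
proof -
  have "(\<Sum>i\<in>I. w i *\<^sub>R (y i, c i)) \<in> {(x, r::real). F x \<le> ereal r}"
    using assms by (intro convex_sum[OF assms(2) assms(1)[unfolded convex_fun_def]]) auto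
  moreover have "(\<Sum>i\<in>I. w i *\<^sub>R (y i, c i)) = ((\<Sum>i\<in>I. w i *\<^sub>R y i), (\<Sum>i\<in>I. w i * c i))"
    by (simp add: prod_eq_iff fst_sum snd_sum)
  ultimately show ?thesis by simp
qed

lemma proper_fun_add_finite:
  assumes "proper_fun (\<lambda>y. F y + H y)" "F y < \<infinity>" "H y < \<infinity>"
  shows "\<bar>F y\<bar> \<noteq> \<infinity>" "\<bar>H y\<bar> \<noteq> \<infinity>"
proof -
  have "F y + H y \<noteq> -\<infinity>" using assms(1) unfolding proper_fun_def by blast
  then show "\<bar>F y\<bar> \<noteq> \<infinity>" "\<bar>H y\<bar> \<noteq> \<infinity>" using assms(2,3) by auto
qed

lemma conjugate_neq_MInfty:
  assumes "proper_fun g"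
  shows "conjugate g w \<noteq> -\<infinity>"
proof -
  obtain y where y: "g y < \<infinity>" "g y \<noteq> -\<infinity>"
    using assms unfolding proper_fun_def edom_def by blast
  have "ereal (w \<bullet> y) - g y \<le> conjugate g w" unfolding conjugate_def by (rule SUP_upper) auto
  moreover have "ereal (w \<bullet> y) - g y \<noteq> -\<infinity>" using y by (cases "g y") auto
  ultimately show ?thesis by auto
qed

lemma convex_fun_conjugate:
  fixes g :: "'a::real_inner \<Rightarrow> ereal"
  assumes "proper_fun g"
  shows "convex_fun (conjugate g)"
  unfolding convex_fun_def
proof (rule convexI, clarsimp)
  fix x x' :: 'a and r r' u v :: real
  assume r: "conjugate g x \<le> ereal r" "conjugate g x' \<le> ereal r'"
    and uv: "0 \<le> u" "0 \<le> v" "u + v = 1"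
  show "conjugate g (u *\<^sub>R x + v *\<^sub>R x') \<le> ereal (u * r + v * r')"
    unfolding conjugate_def
  proof (rule SUP_least)
    fix y
    show "ereal ((u *\<^sub>R x + v *\<^sub>R x') \<bullet> y) - g y \<le> ereal (u * r + v * r')"
    proof (cases "g y")
      case (real gy)
      have "ereal (w \<bullet> y) - g y \<le> conjugate g w" for w
        unfolding conjugate_def by (rule SUP_upper) auto
      then have "x \<bullet> y - gy \<le> r" "x' \<bullet> y - gy \<le> r'"
        using r real by (metis ereal_less_eq(3) ereal_minus(1) order_trans)+
      then have "u * (x \<bullet> y - gy) + v * (x' \<bullet> y - gy) \<le> u * r + v * r'"
        using uv by (intro add_mono mult_left_mono) auto
      moreover have "u * (x \<bullet> y - gy) + v * (x' \<bullet> y - gy) = (u *\<^sub>R x + v *\<^sub>R x') \<bullet> y - gy"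
        using uv(3) by (simp add: inner_simps algebra_simps flip: distrib_left)
      ultimately show ?thesis using real by simp
    next
      case MInf then show ?thesis using assms unfolding proper_fun_def by blast
    qed simp
  qed
qed

lemma has_derivative_along_line:
  assumes "(F has_derivative (\<lambda>w. g \<bullet> w)) (at p)"
  shows "((\<lambda>t. F (p + t *\<^sub>R v)) has_real_derivative g \<bullet> v) (at 0)"
proof -
  have line: "((\<lambda>t::real. p + t *\<^sub>R v) has_derivative (\<lambda>t. t *\<^sub>R v)) (at 0)"
    by (auto intro!: derivative_eq_intros)
  have "(F has_derivative (\<lambda>w. g \<bullet> w)) (at (p + 0 *\<^sub>R v))"
    using assms by simp
  from diff_chain_at[OF line this]
  have "((\<lambda>t. F (p + t *\<^sub>R v)) has_derivative (\<lambda>t. g \<bullet> (t *\<^sub>R v))) (at 0)"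
    by (simp add: o_def)
  then show ?thesis
    unfolding has_field_derivative_def by (rule has_derivative_eq_rhs) (auto simp: mult.commute)
qed

lemma has_real_derivative_ge_of_increment_ge:
  fixes q :: "real \<Rightarrow> real"
  assumes "(q has_real_derivative D) (at 0)"
    and "\<forall>\<^sub>F t in at_right 0. C * t \<le> q t - q 0"
  shows "C \<le> D"
proof -
  have "((\<lambda>t. (q t - q 0) / (t - 0)) \<longlongrightarrow> D) (at_right 0)"
    using assms(1) has_field_derivative_iff has_field_derivative_at_within by blast
  moreover have "\<forall>\<^sub>F t in at_right 0. C \<le> (q t - q 0) / (t - 0)"
    using assms(2) eventually_at_right_less[of 0]
    by eventually_elim (auto simp: pos_le_divide_eq)
  ultimately show ?thesis
    using tendsto_lowerbound trivial_limit_at_right_real by blast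
qed

lemma has_real_derivative_le_of_increment_le:
  fixes q :: "real \<Rightarrow> real"
  assumes "(q has_real_derivative D) (at 0)"
    and "\<forall>\<^sub>F t in at_right 0. q t - q 0 \<le> C * t"
  shows "D \<le> C"
proof -
  have "- C \<le> - D"
  proof (rule has_real_derivative_ge_of_increment_ge)
    show "((\<lambda>t. - q t) has_real_derivative - D) (at 0)"
      using assms(1) by (rule DERIV_minus)
    show "\<forall>\<^sub>F t in at_right 0. - C * t \<le> - q t - - q 0"
      using assms(2) by eventually_elim simp
  qed
  then show ?thesis by simp
qed

lemma interior_eventually_along_line:
  fixes p :: "'a::real_normed_vector"
  assumes "p \<in> interior S"
  shows "\<forall>\<^sub>F t in at_right 0. p + t *\<^sub>R v \<in> S"
proof -
  have "((\<lambda>t::real. p + t *\<^sub>R v) \<longlongrightarrow> p) (at_right 0)"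
    by (auto intro!: tendsto_eq_intros)
  then have "\<forall>\<^sub>F t in at_right 0. p + t *\<^sub>R v \<in> interior S"
    using assms by (rule topological_tendstoD[OF _ open_interior])
  then show ?thesis
    by eventually_elim (use interior_subset in blast)
qed

lemma convex_fun_gradient_le:
  fixes F :: "'a::real_inner \<Rightarrow> ereal"
  assumes "convex_fun F" "\<And>w. w \<in> edom F \<Longrightarrow> F w \<noteq> -\<infinity>"
    and "((\<lambda>w. real_of_ereal (F w)) has_derivative (\<lambda>v. g \<bullet> v)) (at y)"
    and "F y = ereal a" "F u = ereal b"
  shows "g \<bullet> (u - y) \<le> b - a"
proof (rule has_real_derivative_le_of_increment_le[OF has_derivative_along_line[OF assms(3)]])
  show "\<forall>\<^sub>F t in at_right 0.
          real_of_ereal (F (y + t *\<^sub>R (u - y))) - real_of_ereal (F (y + 0 *\<^sub>R (u - y))) \<le> (b - a) * t"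
    using eventually_at_right_real[OF zero_less_one]
  proof eventually_elim
    case (elim t)
    have "F (y + t *\<^sub>R (u - y)) \<le> ereal ((1 - t) * a + t * b)"
      using convex_fun_le_combination[OF assms(1), of y a u b t] assms(4,5) elim
      by (simp add: algebra_simps)
    moreover from this have "y + t *\<^sub>R (u - y) \<in> edom F"
      unfolding edom_def using le_less_trans by fastforce
    ultimately show ?case
      using assms(2,4)
      by (cases "F (y + t *\<^sub>R (u - y))") (auto simp: algebra_simps)
  qed
qed

lemma bprox_wellposedD:
  assumes "prox_wellposed F phi gphi" "y \<in> interior (edom phi)"
  shows "bprox F phi gphi y a \<in> interior (edom phi)"
    and "bprox F phi gphi y a \<in> prox_argmin F phi gphi y a"
proof -
  obtain p where "p \<in> interior (edom phi)" "prox_argmin F phi gphi y a = {p}"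
    using assms unfolding prox_wellposed_def by blast
  moreover from this have "bprox F phi gphi y a = p" unfolding bprox_def by auto
  ultimately show "bprox F phi gphi y a \<in> interior (edom phi)"
    "bprox F phi gphi y a \<in> prox_argmin F phi gphi y a" by auto
qed

lemma prox_argmin_less_PInfty:
  assumes "p \<in> prox_argmin (\<lambda>x. ereal c * F x) phi gphi y a" "p \<in> edom phi"
    and "u \<in> edom phi" "F u < \<infinity>" "c > 0"
  shows "F p < \<infinity>"
proof -
  have "prox_obj (\<lambda>x. ereal c * F x) phi gphi y a p \<le> prox_obj (\<lambda>x. ereal c * F x) phi gphi y a u"
    using assms(1) unfolding prox_argmin_def by blast
  also have "\<dots> < \<infinity>" using assms(3-5) unfolding prox_obj_def
    by (cases "F u") (auto simp: ereal_mult_less_right)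
  finally have "ereal c * F p < \<infinity>" using assms(2) unfolding prox_obj_def by auto
  then show ?thesis using assms(5) by (cases "F p") auto
qed

(* The first-order condition of the prox objective in the direction of u. No assumption on u
   is needed: the value of phi u (junk if u is outside dom phi) cancels. *)
lemma prox_argmin_three_point:
  fixes F :: "'a::euclidean_space \<Rightarrow> ereal"
  assumes kern: "bregman_kernel phi gphi" and c: "c > 0" and conv: "convex_fun F"
    and p_int: "p \<in> interior (edom phi)"
    and p_min: "p \<in> prox_argmin (\<lambda>x. ereal c * F x) phi gphi y a"
    and Fu: "F u = ereal fu" and Fp: "F p = ereal fp"
  shows "c * fp + a \<bullet> p + bdist phi gphi p y + bdist phi gphi u p
         \<le> c * fu + a \<bullet> u + bdist phi gphi u y"
proof -
  define v where "v = u - p"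
  define q where "q t = real_of_ereal (phi (p + t *\<^sub>R v)) + t * ((a - gphi y) \<bullet> v)" for t
  have "((\<lambda>w. real_of_ereal (phi w)) has_derivative (\<lambda>w. gphi p \<bullet> w)) (at p)"
    using kern p_int unfolding bregman_kernel_def by blast
  from has_derivative_along_line[OF this, of v]
  have dq: "(q has_real_derivative gphi p \<bullet> v + (a - gphi y) \<bullet> v) (at 0)"
    unfolding q_def by (auto intro!: derivative_eq_intros)
  have "\<forall>\<^sub>F t in at_right 0. c * (fp - fu) * t \<le> q t - q 0"
    using interior_eventually_along_line[OF p_int, of v] eventually_at_right_real[OF zero_less_one]
  proof eventually_elim
    case (elim t)
    have "p + t *\<^sub>R v = (1 - t) *\<^sub>R p + t *\<^sub>R u" by (simp add: v_def algebra_simps)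
    then have conv_t: "F (p + t *\<^sub>R v) \<le> ereal ((1 - t) * fp + t * fu)"
      using convex_fun_le_combination[OF conv, of p fp u fu t] Fu Fp elim by simp
    have "prox_obj (\<lambda>x. ereal c * F x) phi gphi y a p
          \<le> prox_obj (\<lambda>x. ereal c * F x) phi gphi y a (p + t *\<^sub>R v)"
      using p_min unfolding prox_argmin_def by blast
    then have "ereal (c * fp) + ereal (a \<bullet> p + bdist phi gphi p y) \<le>
        ereal c * F (p + t *\<^sub>R v) + ereal (a \<bullet> (p + t *\<^sub>R v) + bdist phi gphi (p + t *\<^sub>R v) y)"
      using elim interior_subset[of "edom phi"] p_int Fp unfolding prox_obj_def by auto
    also have "\<dots> \<le> ereal c * ereal ((1 - t) * fp + t * fu)
                    + ereal (a \<bullet> (p + t *\<^sub>R v) + bdist phi gphi (p + t *\<^sub>R v) y)"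
      using conv_t c by (intro add_right_mono ereal_mult_left_mono) auto
    finally show ?case
      unfolding q_def bdist_def by (simp add: algebra_simps inner_simps)
  qed
  with dq have "c * (fp - fu) \<le> gphi p \<bullet> v + (a - gphi y) \<bullet> v"
    by (rule has_real_derivative_ge_of_increment_ge)
  then show ?thesis unfolding bdist_def v_def by (simp add: algebra_simps inner_simps)
qed

lemma prox_argmin_three_point_scaled:
  fixes F :: "'a::euclidean_space \<Rightarrow> ereal"
  assumes "bregman_kernel phi gphi" "c > 0" "convex_fun F" "p \<in> interior (edom phi)"
    and "p \<in> prox_argmin (\<lambda>x. ereal c * F x) phi gphi y (c *\<^sub>R a)"
    and "F u = ereal fu" "F p = ereal fp"
  shows "fp + a \<bullet> p + (bdist phi gphi p y + bdist phi gphi u p) / c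
         \<le> fu + a \<bullet> u + bdist phi gphi u y / c"
proof -
  have "c * fp + (c *\<^sub>R a) \<bullet> p + bdist phi gphi p y + bdist phi gphi u p
         \<le> c * fu + (c *\<^sub>R a) \<bullet> u + bdist phi gphi u y"
    by (rule prox_argmin_three_point[OF assms])
  then have "c * (fp + a \<bullet> p + (bdist phi gphi p y + bdist phi gphi u p) / c)
         \<le> c * (fu + a \<bullet> u + bdist phi gphi u y / c)"
    using assms(2) by (simp add: algebra_simps add_divide_distrib)
  then show ?thesis using assms(2) by simp
qed

lemma is_norm_zero: "is_norm N \<Longrightarrow> N 0 = 0"
  unfolding is_norm_def by blast

lemma is_norm_minus: "is_norm N \<Longrightarrow> N (- x) = N x"
  unfolding is_norm_def by (metis abs_minus_cancel abs_one mult_cancel_right1 scaleR_minus1_left)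

lemma is_norm_nonneg:
  assumes "is_norm N"
  shows "0 \<le> N x"
proof -
  have "N (x + - x) \<le> N x + N (- x)" using assms unfolding is_norm_def by blast
  then show ?thesis using is_norm_zero[OF assms] is_norm_minus[OF assms, of x] by simp
qed

lemma is_norm_bounded_below:
  fixes N :: "'a::euclidean_space \<Rightarrow> real"
  assumes n: "is_norm N"
  obtains m where "m > 0" "\<And>u. m * norm u \<le> N u"
proof -
  have "convex_on UNIV N"
  proof (rule convex_onI)
    fix t :: real and x y :: 'a assume t: "0 < t" "t < 1"
    have "N ((1 - t) *\<^sub>R x + t *\<^sub>R y) \<le> N ((1 - t) *\<^sub>R x) + N (t *\<^sub>R y)"
      using n unfolding is_norm_def by blast
    also have "\<dots> = (1 - t) * N x + t * N y"
      using n t unfolding is_norm_def by simp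
    finally show "N ((1 - t) *\<^sub>R x + t *\<^sub>R y) \<le> (1 - t) * N x + t * N y" .
  qed simp
  then have "continuous_on (sphere 0 1) N"
    using convex_on_continuous[OF open_UNIV] continuous_on_subset by blast
  moreover obtain b :: 'a where "b \<in> Basis" using nonempty_Basis by blast
  then have "sphere (0::'a) 1 \<noteq> {}" by force
  ultimately obtain x0 where x0: "x0 \<in> sphere 0 1" "\<And>y. y \<in> sphere 0 1 \<Longrightarrow> N x0 \<le> N y"
    using continuous_attains_inf[OF compact_sphere] by metis
  have "N x0 > 0"
    using x0(1) is_norm_nonneg[OF n, of x0] n unfolding is_norm_def by (auto simp: less_le)
  moreover have "N x0 * norm u \<le> N u" for u
  proof (cases "u = 0")
    case False
    then have "N x0 \<le> N ((1 / norm u) *\<^sub>R u)" by (intro x0(2)) simp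
    then have "N x0 * norm u \<le> norm u * N ((1 / norm u) *\<^sub>R u)"
      by (metis mult.commute mult_left_mono norm_ge_zero)
    also have "\<dots> = N u" using n False unfolding is_norm_def by simp
    finally show ?thesis .
  qed (simp add: is_norm_zero[OF n])
  ultimately show ?thesis using that by blast
qed

lemma inner_le_op_norm:
  fixes A :: "real^'n^'m"
  assumes np: "is_norm np" and nd: "is_norm nd"
  shows "v \<bullet> (A *v u) \<le> op_norm np nd A * nd v * np u"
proof (cases "u = 0 \<or> v = 0")
  case True then show ?thesis using is_norm_zero[OF np] is_norm_zero[OF nd] by auto
next
  case False
  obtain mp where mp: "mp > 0" "\<And>u. mp * norm u \<le> np u" using is_norm_bounded_below[OF np] by metis
  obtain md where md: "md > 0" "\<And>v. md * norm v \<le> nd v" using is_norm_bounded_below[OF nd] by metis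
  define K where "K = onorm ((*v) A)"
  have "K \<ge> 0" unfolding K_def by (simp add: onorm_pos_le)
  let ?S = "{(v \<bullet> (A *v u)) / (nd v * np u) | u v. u \<noteq> 0 \<and> v \<noteq> 0}"
  have "w \<le> K / (md * mp)" if "w \<in> ?S" for w
  proof -
    obtain u v where uv: "w = (v \<bullet> (A *v u)) / (nd v * np u)" "u \<noteq> 0" "v \<noteq> 0"
      using \<open>w \<in> ?S\<close> by blast
    have "v \<bullet> (A *v u) \<le> norm v * norm (A *v u)" by (rule norm_cauchy_schwarz)
    also have "\<dots> \<le> norm v * (K * norm u)" unfolding K_def
      by (intro mult_left_mono onorm) auto
    finally have num: "v \<bullet> (A *v u) \<le> K * (norm v * norm u)" by (simp add: algebra_simps)
    have den: "(md * norm v) * (mp * norm u) \<le> nd v * np u"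
      using md mp by (intro mult_mono) (auto intro: order_trans[OF _ md(2)])
    have "w \<le> K * (norm v * norm u) / ((md * norm v) * (mp * norm u))"
      unfolding uv(1) by (rule frac_le) (use num den \<open>K \<ge> 0\<close> uv md mp in auto)
    also have "\<dots> = K / (md * mp)" using uv by (simp add: field_simps)
    finally show ?thesis .
  qed
  then have "bdd_above ?S" unfolding bdd_above_def by blast
  moreover have "(v \<bullet> (A *v u)) / (nd v * np u) \<in> ?S" using False by blast
  ultimately have "(v \<bullet> (A *v u)) / (nd v * np u) \<le> op_norm np nd A"
    unfolding op_norm_def by (intro cSup_upper)
  moreover have "nd v > 0" "np u > 0" using False md mp
    by (auto intro: less_le_trans[OF _ md(2)] less_le_trans[OF _ mp(2)])
  ultimately show ?thesis by (simp add: pos_divide_le_eq mult.assoc)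
qed

lemma abs_inner_le_op_norm_squares:
  fixes A :: "real^'n^'m"
  assumes np: "is_norm np" and nd: "is_norm nd" and \<sigma>: "\<sigma> > 0"
    and c: "\<sigma> * (op_norm np nd A)\<^sup>2 \<le> c"
    and Dd: "1/2 * (nd v)\<^sup>2 \<le> Dd" and Dp: "1/2 * (np u)\<^sup>2 \<le> Dp"
  shows "\<bar>v \<bullet> (A *v u)\<bar> \<le> Dd / \<sigma> + c * Dp"
proof -
  define M where "M = op_norm np nd A"
  have "\<bar>v \<bullet> (A *v u)\<bar> \<le> M * nd v * np u"
    using inner_le_op_norm[OF np nd, of v A u] inner_le_op_norm[OF np nd, of "- v" A u]
    unfolding M_def is_norm_minus[OF nd] by (simp add: abs_le_iff)
  also have "\<dots> \<le> (nd v)\<^sup>2 / (2 * \<sigma>) + \<sigma> * M\<^sup>2 * (np u)\<^sup>2 / 2"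
  proof -
    have "2 * \<sigma> * (M * nd v * np u) \<le> (nd v)\<^sup>2 + \<sigma>\<^sup>2 * M\<^sup>2 * (np u)\<^sup>2"
      using zero_le_power2[of "nd v - \<sigma> * M * np u"] by (simp add: power2_eq_square algebra_simps)
    then show ?thesis using \<sigma> by (simp add: field_simps power2_eq_square)
  qed
  also have "\<dots> \<le> Dd / \<sigma> + c * Dp"
  proof -
    have "(nd v)\<^sup>2 / (2 * \<sigma>) \<le> Dd / \<sigma>" using Dd \<sigma> by (simp add: field_simps)
    moreover have "\<sigma> * M\<^sup>2 * (np u)\<^sup>2 / 2 \<le> \<sigma> * M\<^sup>2 * Dp" using Dp \<sigma> by (simp add: mult_left_mono)
    moreover have "\<sigma> * M\<^sup>2 * Dp \<le> c * Dp"
      using c Dp unfolding M_def by (intro mult_right_mono) (auto intro: order_trans[OF _ Dp])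
    ultimately show ?thesis by linarith
  qed
  finally show ?thesis .
qed

lemma telescoping_sum_le:
  fixes gap D P :: "nat \<Rightarrow> real"
  assumes step: "\<And>j. gap (Suc j) \<le> D j - D (Suc j) + s * (P (Suc j) - P j)"
    and P_le: "\<And>j. \<bar>P j\<bar> \<le> D j" and s: "\<bar>s\<bar> \<le> 1"
  shows "(\<Sum>i=1..k. gap i) \<le> 2 * D 0"
proof -
  have "(\<Sum>i=1..k. gap i) \<le> D 0 - D k + s * (P k - P 0)"
  proof (induction k)
    case (Suc k)
    then show ?case
      using step[of k] by (simp add: right_diff_distrib)
  qed simp
  moreover have "s * (P k - P 0) \<le> \<bar>s\<bar> * \<bar>P k - P 0\<bar>"
    by (metis abs_ge_self abs_mult)
  moreover have "\<bar>s\<bar> * \<bar>P k - P 0\<bar> \<le> \<bar>P k - P 0\<bar>"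
    using s by (simp add: mult_left_le_one_le)
  ultimately show ?thesis using P_le[of k] P_le[of 0] by linarith
qed

lemma extrapolation_coupling_identity:
  fixes A :: "real^'n^'m"
  assumes "s = 1 \<and> \<zeta> = Z0 \<and> \<xi> = 2 *\<^sub>R X - X0 \<or> s = -1 \<and> \<zeta> = 2 *\<^sub>R Z - Z0 \<and> \<xi> = X0"
  shows "(transpose A *v \<zeta>) \<bullet> (x - X) + (A *v \<xi>) \<bullet> (Z - z) + z \<bullet> (A *v X) - Z \<bullet> (A *v x)
    = s * ((Z - z) \<bullet> (A *v (X - x)) - (Z0 - z) \<bullet> (A *v (X0 - x)) + (Z - Z0) \<bullet> (A *v (X - X0)))"
proof -
  have swap: "(A *v w) \<bullet> v = v \<bullet> (A *v w)" for v w by (rule inner_commute)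
  from assms show ?thesis
    by (elim disjE conjE) (hypsubst, simp add: inner_simps algebra_simps dot_lmul_matrix swap)+
qed

lemma lagrangian_eq_ereal:
  assumes "f x = ereal a" "h x = ereal b" "conjugate g z = ereal c"
  shows "lagrangian f h g A x z = ereal (a + b + z \<bullet> (A *v x) - c)"
  using assms unfolding lagrangian_def edom_def by simp

lemma real_of_ereal_lagrangian:
  assumes "\<bar>f x\<bar> \<noteq> \<infinity>" "\<bar>h x\<bar> \<noteq> \<infinity>" "\<bar>conjugate g z\<bar> \<noteq> \<infinity>"
  shows "real_of_ereal (lagrangian f h g A x z)
    = real_of_ereal (f x) + real_of_ereal (h x) + z \<bullet> (A *v x) - real_of_ereal (conjugate g z)"
  using assms by (subst lagrangian_eq_ereal[where a="real_of_ereal (f x)" and b="real_of_ereal (h x)"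
      and c="real_of_ereal (conjugate g z)"]) (simp_all add: ereal_real')

lemma lagrangian_convex_combination_le:
  fixes f h :: "real^'n \<Rightarrow> ereal" and g :: "real^'m \<Rightarrow> ereal" and A :: "real^'n^'m"
  assumes f: "convex_fun f" and h: "convex_fun h" and fh: "proper_fun (\<lambda>y. f y + h y)"
    and w: "finite I" "sum w I = 1" "\<And>i. i \<in> I \<Longrightarrow> 0 \<le> w i"
    and fin: "\<And>i. i \<in> I \<Longrightarrow> \<bar>f (xs i)\<bar> \<noteq> \<infinity> \<and> \<bar>h (xs i)\<bar> \<noteq> \<infinity>"
    and Gz: "\<bar>conjugate g z\<bar> \<noteq> \<infinity>"
  shows "lagrangian f h g A (\<Sum>i\<in>I. w i *\<^sub>R xs i) z
         \<le> ereal (\<Sum>i\<in>I. w i * real_of_ereal (lagrangian f h g A (xs i) z))"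
proof -
  define x where "x = (\<Sum>i\<in>I. w i *\<^sub>R xs i)"
  have fx: "f x \<le> ereal (\<Sum>i\<in>I. w i * real_of_ereal (f (xs i)))"
    unfolding x_def by (intro convex_fun_le_sum[OF f w]) (use fin in \<open>auto simp: ereal_real'\<close>)
  have hx: "h x \<le> ereal (\<Sum>i\<in>I. w i * real_of_ereal (h (xs i)))"
    unfolding x_def by (intro convex_fun_le_sum[OF h w]) (use fin in \<open>auto simp: ereal_real'\<close>)
  have "f x < \<infinity>" "h x < \<infinity>" using fx hx le_less_trans by fastforce+
  then have fin_x: "\<bar>f x\<bar> \<noteq> \<infinity>" "\<bar>h x\<bar> \<noteq> \<infinity>" by (rule proper_fun_add_finite[OF fh])+
  then have le: "real_of_ereal (f x) \<le> (\<Sum>i\<in>I. w i * real_of_ereal (f (xs i)))"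
    "real_of_ereal (h x) \<le> (\<Sum>i\<in>I. w i * real_of_ereal (h (xs i)))"
    using fx hx by (cases "f x"; cases "h x"; simp)+
  have "lagrangian f h g A x z = ereal (real_of_ereal (f x) + real_of_ereal (h x)
      + z \<bullet> (A *v x) - real_of_ereal (conjugate g z))"
    using fin_x Gz by (intro lagrangian_eq_ereal) (simp_all add: ereal_real')
  also have "\<dots> \<le> ereal ((\<Sum>i\<in>I. w i * real_of_ereal (f (xs i)))
      + (\<Sum>i\<in>I. w i * real_of_ereal (h (xs i))) + z \<bullet> (A *v x) - real_of_ereal (conjugate g z))"
    using le by simp
  also have "\<dots> = ereal (\<Sum>i\<in>I. w i * real_of_ereal (lagrangian f h g A (xs i) z))"
  proof -
    have "lagrangian f h g A (xs i) z = ereal (real_of_ereal (f (xs i)) + real_of_ereal (h (xs i))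
        + z \<bullet> (A *v xs i) - real_of_ereal (conjugate g z))" if "i \<in> I" for i
      using fin[OF that] Gz by (intro lagrangian_eq_ereal) (simp_all add: ereal_real')
    moreover have "z \<bullet> (A *v x) = (\<Sum>i\<in>I. w i * (z \<bullet> (A *v xs i)))"
      unfolding x_def
      by (simp add: matrix_vector_mult_scaleR inner_sum_right linear_sum[OF matrix_vector_mul_linear])
    ultimately show ?thesis
      using w(2) by (simp add: algebra_simps sum.distrib sum_subtractf flip: sum_distrib_right)
  qed
  finally show ?thesis unfolding x_def .
qed

lemma lagrangian_concave_combination_ge:
  fixes f h :: "real^'n \<Rightarrow> ereal" and g :: "real^'m \<Rightarrow> ereal" and A :: "real^'n^'m"
  assumes g: "proper_fun g"
    and w: "finite I" "sum w I = 1" "\<And>i. i \<in> I \<Longrightarrow> 0 \<le> w i"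
    and fin: "\<And>i. i \<in> I \<Longrightarrow> \<bar>conjugate g (zs i)\<bar> \<noteq> \<infinity>"
    and fx: "\<bar>f x\<bar> \<noteq> \<infinity>" and hx: "\<bar>h x\<bar> \<noteq> \<infinity>"
  shows "ereal (\<Sum>i\<in>I. w i * real_of_ereal (lagrangian f h g A x (zs i)))
         \<le> lagrangian f h g A x (\<Sum>i\<in>I. w i *\<^sub>R zs i)"
proof -
  define z where "z = (\<Sum>i\<in>I. w i *\<^sub>R zs i)"
  have Gz: "conjugate g z \<le> ereal (\<Sum>i\<in>I. w i * real_of_ereal (conjugate g (zs i)))"
    unfolding z_def
    by (intro convex_fun_le_sum[OF convex_fun_conjugate[OF g] w]) (use fin in \<open>auto simp: ereal_real'\<close>)
  then have fin_z: "\<bar>conjugate g z\<bar> \<noteq> \<infinity>"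
    using conjugate_neq_MInfty[OF g, of z] by auto
  have "ereal (\<Sum>i\<in>I. w i * real_of_ereal (lagrangian f h g A x (zs i)))
      = ereal (real_of_ereal (f x) + real_of_ereal (h x) + z \<bullet> (A *v x)
               - (\<Sum>i\<in>I. w i * real_of_ereal (conjugate g (zs i))))"
  proof -
    have "lagrangian f h g A x (zs i) = ereal (real_of_ereal (f x) + real_of_ereal (h x)
        + zs i \<bullet> (A *v x) - real_of_ereal (conjugate g (zs i)))" if "i \<in> I" for i
      using fin[OF that] fx hx by (intro lagrangian_eq_ereal) (simp_all add: ereal_real')
    moreover have "z \<bullet> (A *v x) = (\<Sum>i\<in>I. w i * (zs i \<bullet> (A *v x)))"
      unfolding z_def by (simp add: inner_sum_left)
    ultimately show ?thesis
      using w(2) by (simp add: algebra_simps sum.distrib sum_subtractf flip: sum_distrib_right)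
  qed
  also have "\<dots> \<le> ereal (real_of_ereal (f x) + real_of_ereal (h x) + z \<bullet> (A *v x)
                         - real_of_ereal (conjugate g z))"
    using Gz fin_z by (cases "conjugate g z") auto
  also have "\<dots> = lagrangian f h g A x z"
    using fx hx fin_z by (intro lagrangian_eq_ereal[symmetric]) (simp_all add: ereal_real')
  finally show ?thesis unfolding z_def .
qed

lemma lagrangian_gap_convex_combination_le:
  fixes f h :: "real^'n \<Rightarrow> ereal" and g :: "real^'m \<Rightarrow> ereal" and A :: "real^'n^'m"
  assumes "convex_fun f" "convex_fun h" "proper_fun (\<lambda>y. f y + h y)" "proper_fun g"
    and "finite I" "sum w I = 1" "\<And>i. i \<in> I \<Longrightarrow> 0 \<le> w i"
    and "\<And>i. i \<in> I \<Longrightarrow> \<bar>f (xs i)\<bar> \<noteq> \<infinity> \<and> \<bar>h (xs i)\<bar> \<noteq> \<infinity> \<and> \<bar>conjugate g (zs i)\<bar> \<noteq> \<infinity>"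
    and "\<bar>f x\<bar> \<noteq> \<infinity>" "\<bar>h x\<bar> \<noteq> \<infinity>" "\<bar>conjugate g z\<bar> \<noteq> \<infinity>"
  shows "lagrangian f h g A (\<Sum>i\<in>I. w i *\<^sub>R xs i) z - lagrangian f h g A x (\<Sum>i\<in>I. w i *\<^sub>R zs i)
    \<le> ereal (\<Sum>i\<in>I. w i * (real_of_ereal (lagrangian f h g A (xs i) z)
                               - real_of_ereal (lagrangian f h g A x (zs i))))"
proof -
  have "lagrangian f h g A (\<Sum>i\<in>I. w i *\<^sub>R xs i) z - lagrangian f h g A x (\<Sum>i\<in>I. w i *\<^sub>R zs i)
    \<le> ereal (\<Sum>i\<in>I. w i * real_of_ereal (lagrangian f h g A (xs i) z))
       - ereal (\<Sum>i\<in>I. w i * real_of_ereal (lagrangian f h g A x (zs i)))"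
    using assms
    by (intro ereal_minus_mono lagrangian_convex_combination_le lagrangian_concave_combination_ge) auto
  then show ?thesis by (simp add: right_diff_distrib sum_subtractf)
qed

(* Both algorithms are a primal and a dual Bregman proximal step, each evaluated at a point
   zeta or xi of the other variable, possibly extrapolated; the two differ only in the sign s
   of the resulting coupling term. *)
lemma condat_vu_iteration_cases:
  assumes "(\<forall>j. xs (Suc j) = bprox F phip gphip (xs j)
                             (\<tau> *\<^sub>R (transpose A *v zs j) + \<tau> *\<^sub>R gh (xs j)) \<and>
            zs (Suc j) = bprox G phid gphid (zs j)
                             (- (\<sigma> *\<^sub>R (A *v (2 *\<^sub>R xs (Suc j) - xs j)))))
       \<or>
       (\<forall>j. zs (Suc j) = bprox G phid gphid (zs j)
                             (- (\<sigma> *\<^sub>R (A *v xs j))) \<and>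
            xs (Suc j) = bprox F phip gphip (xs j)
                             (\<tau> *\<^sub>R (transpose A *v (2 *\<^sub>R zs (Suc j) - zs j)) + \<tau> *\<^sub>R gh (xs j)))"
  obtains \<zeta> \<xi> and s :: real where
    "\<And>j. xs (Suc j) = bprox F phip gphip (xs j) (\<tau> *\<^sub>R (transpose A *v \<zeta> j + gh (xs j)))"
    "\<And>j. zs (Suc j) = bprox G phid gphid (zs j) (- (\<sigma> *\<^sub>R (A *v \<xi> j)))"
    "\<And>j. s = 1 \<and> \<zeta> j = zs j \<and> \<xi> j = 2 *\<^sub>R xs (Suc j) - xs j
        \<or> s = -1 \<and> \<zeta> j = 2 *\<^sub>R zs (Suc j) - zs j \<and> \<xi> j = xs j"
  using assms
  by (elim disjE)
    ((rule that[where \<zeta>="\<lambda>j. zs j" and \<xi>="\<lambda>j. 2 *\<^sub>R xs (Suc j) - xs j" and s=1];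
       simp add: scaleR_right_distrib),
     (rule that[where \<zeta>="\<lambda>j. 2 *\<^sub>R zs (Suc j) - zs j" and \<xi>="\<lambda>j. xs j" and s="-1"];
       simp add: scaleR_right_distrib))

locale bregman_condat_vu =
  fixes f h :: "real^'n \<Rightarrow> ereal" and g :: "real^'m \<Rightarrow> ereal"
    and A :: "real^'n^'m" and gh :: "real^'n \<Rightarrow> real^'n"
    and phip :: "real^'n \<Rightarrow> ereal" and gphip :: "real^'n \<Rightarrow> real^'n"
    and phid :: "real^'m \<Rightarrow> ereal" and gphid :: "real^'m \<Rightarrow> real^'m"
    and np :: "real^'n \<Rightarrow> real" and nd :: "real^'m \<Rightarrow> real"
    and L \<sigma> \<tau> :: real
  assumes f_convex: "convex_fun f" and h_convex: "convex_fun h"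
    and h_diff: "\<forall>y\<in>edom h. h y \<noteq> -\<infinity> \<and>
                   ((\<lambda>u. real_of_ereal (h u)) has_derivative (\<lambda>v. gh y \<bullet> v)) (at y)"
    and fh_proper: "proper_fun (\<lambda>y. f y + h y)" and g_proper: "proper_fun g"
    and kp: "bregman_kernel phip gphip" and kd: "bregman_kernel phid gphid"
    and proxp: "prox_wellposed (\<lambda>y. ereal \<tau> * f y) phip gphip"
    and proxd: "prox_wellposed (\<lambda>w. ereal \<sigma> * conjugate g w) phid gphid"
    and np: "is_norm np" and nd: "is_norm nd"
    and sc_p: "\<forall>y\<in>edom phip. \<forall>y'\<in>interior (edom phip).
                 bdist phip gphip y y' \<ge> 1/2 * (np (y - y'))\<^sup>2"
    and sc_d: "\<forall>w\<in>edom phid. \<forall>w'\<in>interior (edom phid).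
                 bdist phid gphid w w' \<ge> 1/2 * (nd (w - w'))\<^sup>2"
    and dom_sub: "edom phip \<subseteq> edom h"
    and rel_smooth: "\<forall>y\<in>edom phip. \<forall>y'\<in>interior (edom phip).
          real_of_ereal (h y) - real_of_ereal (h y') - gh y' \<bullet> (y - y') \<le> L * bdist phip gphip y y'"
    and L_nonneg: "0 \<le> L" and \<sigma>_pos: "\<sigma> > 0" and \<tau>_pos: "\<tau> > 0"
    and step_size: "\<sigma> * \<tau> * (op_norm np nd A)\<^sup>2 + \<tau> * L \<le> 1"
begin

definition energy :: "real^'n \<Rightarrow> real^'m \<Rightarrow> real^'n \<Rightarrow> real^'m \<Rightarrow> real" where
  "energy x z X Z = bdist phip gphip x X / \<tau> + bdist phid gphid z Z / \<sigma>"

definition coupling :: "real^'n \<Rightarrow> real^'m \<Rightarrow> real^'n \<Rightarrow> real^'m \<Rightarrow> real" where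
  "coupling x z X Z = (Z - z) \<bullet> (A *v (X - x))"

definition gap :: "real^'n \<Rightarrow> real^'m \<Rightarrow> real^'n \<Rightarrow> real^'m \<Rightarrow> real" where
  "gap x z X Z = real_of_ereal (lagrangian f h g A X z) - real_of_ereal (lagrangian f h g A x Z)"

lemma h_finite:
  assumes "y \<in> edom phip"
  shows "\<bar>h y\<bar> \<noteq> \<infinity>"
proof -
  have "y \<in> edom h" using assms dom_sub by blast
  then have "h y < \<infinity>" "h y \<noteq> -\<infinity>" using h_diff unfolding edom_def by auto
  then show ?thesis by (cases "h y") auto
qed

lemma f_finite:
  assumes "y \<in> edom phip" "f y < \<infinity>"
  shows "\<bar>f y\<bar> \<noteq> \<infinity>"
proof -
  have "h y < \<infinity>" using assms(1) dom_sub unfolding edom_def by blast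
  with assms(2) show ?thesis by (rule proper_fun_add_finite(1)[OF fh_proper])
qed

lemma conjugate_finite:
  assumes "conjugate g w < \<infinity>"
  shows "\<bar>conjugate g w\<bar> \<noteq> \<infinity>"
  using assms conjugate_neq_MInfty[OF g_proper, of w] by (cases "conjugate g w") auto

lemma primal_prox_step:
  assumes "X0 \<in> interior (edom phip)" "x \<in> edom f \<inter> edom phip"
  shows "bprox (\<lambda>y. ereal \<tau> * f y) phip gphip X0 a \<in> interior (edom phip)"
    and "\<bar>f (bprox (\<lambda>y. ereal \<tau> * f y) phip gphip X0 a)\<bar> \<noteq> \<infinity>"
proof -
  let ?X = "bprox (\<lambda>y. ereal \<tau> * f y) phip gphip X0 a"
  note X = bprox_wellposedD[OF proxp assms(1), of a]
  show "?X \<in> interior (edom phip)" by (fact X(1))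
  then have "?X \<in> edom phip" using interior_subset by blast
  moreover have "x \<in> edom phip" "f x < \<infinity>" using assms(2) unfolding edom_def by auto
  ultimately have "f ?X < \<infinity>"
    using X(2) \<tau>_pos by (intro prox_argmin_less_PInfty)
  with \<open>?X \<in> edom phip\<close> show "\<bar>f ?X\<bar> \<noteq> \<infinity>" by (rule f_finite)
qed

lemma dual_prox_step:
  assumes "Z0 \<in> interior (edom phid)" "z \<in> edom (conjugate g) \<inter> edom phid"
  shows "bprox (\<lambda>w. ereal \<sigma> * conjugate g w) phid gphid Z0 a \<in> interior (edom phid)"
    and "\<bar>conjugate g (bprox (\<lambda>w. ereal \<sigma> * conjugate g w) phid gphid Z0 a)\<bar> \<noteq> \<infinity>"
proof -
  let ?Z = "bprox (\<lambda>w. ereal \<sigma> * conjugate g w) phid gphid Z0 a"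
  note Z = bprox_wellposedD[OF proxd assms(1), of a]
  show "?Z \<in> interior (edom phid)" by (fact Z(1))
  then have "?Z \<in> edom phid" using interior_subset by blast
  moreover have "z \<in> edom phid" "conjugate g z < \<infinity>" using assms(2) unfolding edom_def by auto
  ultimately have "conjugate g ?Z < \<infinity>"
    using Z(2) \<sigma>_pos by (intro prox_argmin_less_PInfty)
  then show "\<bar>conjugate g ?Z\<bar> \<noteq> \<infinity>" by (rule conjugate_finite)
qed

lemma h_descent:
  assumes "X0 \<in> interior (edom phip)" "X \<in> edom phip" "x \<in> edom phip"
  shows "real_of_ereal (h X) - real_of_ereal (h x) \<le> gh X0 \<bullet> (X - x) + L * bdist phip gphip X X0"
proof -
  have X0: "X0 \<in> edom phip" using assms(1) interior_subset by blast
  have "gh X0 \<bullet> (x - X0) \<le> real_of_ereal (h x) - real_of_ereal (h X0)"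
    using h_diff dom_sub X0 h_finite[OF assms(3)] h_finite[OF X0]
    by (intro convex_fun_gradient_le[OF h_convex]) (auto simp: ereal_real')
  moreover have "real_of_ereal (h X) - real_of_ereal (h X0) - gh X0 \<bullet> (X - X0)
      \<le> L * bdist phip gphip X X0"
    using rel_smooth assms(1,2) by blast
  ultimately show ?thesis by (simp add: inner_diff_right)
qed

lemma bdist_primal_nonneg:
  assumes "u \<in> edom phip" "u' \<in> interior (edom phip)"
  shows "0 \<le> bdist phip gphip u u'"
proof -
  have "1/2 * (np (u - u'))\<^sup>2 \<le> bdist phip gphip u u'" using sc_p assms by blast
  moreover have "0 \<le> 1/2 * (np (u - u'))\<^sup>2" by simp
  ultimately show ?thesis by linarith
qed

lemma abs_coupling_le:
  assumes "u \<in> edom phip" "u' \<in> interior (edom phip)" "v \<in> edom phid" "v' \<in> interior (edom phid)"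
  shows "\<bar>(v - v') \<bullet> (A *v (u - u'))\<bar>
         \<le> bdist phid gphid v v' / \<sigma> + bdist phip gphip u u' / \<tau> - L * bdist phip gphip u u'"
proof -
  have "\<sigma> * (op_norm np nd A)\<^sup>2 \<le> 1 / \<tau> - L"
    using step_size \<tau>_pos by (simp add: field_simps)
  with assms have "\<bar>(v - v') \<bullet> (A *v (u - u'))\<bar>
      \<le> bdist phid gphid v v' / \<sigma> + (1 / \<tau> - L) * bdist phip gphip u u'"
    using sc_p sc_d by (intro abs_inner_le_op_norm_squares[OF np nd \<sigma>_pos]) auto
  then show ?thesis by (simp add: algebra_simps)
qed

lemma abs_coupling_le_energy:
  assumes "x \<in> edom phip" "z \<in> edom phid" "X \<in> interior (edom phip)" "Z \<in> interior (edom phid)"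
  shows "\<bar>coupling x z X Z\<bar> \<le> energy x z X Z"
proof -
  have "coupling x z X Z = (z - Z) \<bullet> (A *v (x - X))"
    unfolding coupling_def by (simp add: algebra_simps inner_diff_left inner_diff_right)
  moreover have "0 \<le> L * bdist phip gphip x X"
    using bdist_primal_nonneg[OF assms(1,3)] L_nonneg by simp
  ultimately show ?thesis
    using abs_coupling_le[OF assms(1,3,2,4)] unfolding energy_def by linarith
qed

lemma gap_step_le:
  assumes X0: "X0 \<in> interior (edom phip)" and Z0: "Z0 \<in> interior (edom phid)"
    and x: "x \<in> edom f \<inter> edom phip" and z: "z \<in> edom (conjugate g) \<inter> edom phid"
    and X: "X = bprox (\<lambda>y. ereal \<tau> * f y) phip gphip X0 (\<tau> *\<^sub>R (transpose A *v \<zeta> + gh X0))"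
    and Z: "Z = bprox (\<lambda>w. ereal \<sigma> * conjugate g w) phid gphid Z0 (- (\<sigma> *\<^sub>R (A *v \<xi>)))"
    and extrapolation: "s = 1 \<and> \<zeta> = Z0 \<and> \<xi> = 2 *\<^sub>R X - X0 \<or> s = -1 \<and> \<zeta> = 2 *\<^sub>R Z - Z0 \<and> \<xi> = X0"
  shows "gap x z X Z
         \<le> energy x z X0 Z0 - energy x z X Z + s * (coupling x z X Z - coupling x z X0 Z0)"
proof -
  let ?a = "transpose A *v \<zeta> + gh X0"
  have X_int: "X \<in> interior (edom phip)" and fX: "\<bar>f X\<bar> \<noteq> \<infinity>"
    using primal_prox_step[OF X0 x] X by auto
  have Z_int: "Z \<in> interior (edom phid)" and GZ: "\<bar>conjugate g Z\<bar> \<noteq> \<infinity>"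
    using dual_prox_step[OF Z0 z] Z by auto
  have X_dom: "X \<in> edom phip" and Z_dom: "Z \<in> edom phid"
    using X_int Z_int interior_subset by blast+
  have x_dom: "x \<in> edom phip" and fx: "\<bar>f x\<bar> \<noteq> \<infinity>"
    using x f_finite unfolding edom_def by auto
  have z_dom: "z \<in> edom phid" and Gz: "\<bar>conjugate g z\<bar> \<noteq> \<infinity>"
    using z conjugate_finite unfolding edom_def by auto
  have primal: "real_of_ereal (f X) + ?a \<bullet> X + (bdist phip gphip X X0 + bdist phip gphip x X) / \<tau>
      \<le> real_of_ereal (f x) + ?a \<bullet> x + bdist phip gphip x X0 / \<tau>"
    using bprox_wellposedD(2)[OF proxp X0] X fX fx
    by (intro prox_argmin_three_point_scaled[OF kp \<tau>_pos f_convex X_int]) (simp_all add: ereal_real')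
  have dual: "real_of_ereal (conjugate g Z) + (- (A *v \<xi>)) \<bullet> Z
        + (bdist phid gphid Z Z0 + bdist phid gphid z Z) / \<sigma>
      \<le> real_of_ereal (conjugate g z) + (- (A *v \<xi>)) \<bullet> z + bdist phid gphid z Z0 / \<sigma>"
    using bprox_wellposedD(2)[OF proxd Z0] Z GZ Gz
    by (intro prox_argmin_three_point_scaled[OF kd \<sigma>_pos convex_fun_conjugate[OF g_proper] Z_int])
      (simp_all add: ereal_real')
  define B where "B = (Z - Z0) \<bullet> (A *v (X - X0))"
  have coupling_change:
    "(transpose A *v \<zeta>) \<bullet> (x - X) + (A *v \<xi>) \<bullet> (Z - z) + z \<bullet> (A *v X) - Z \<bullet> (A *v x)
      = s * coupling x z X Z - s * coupling x z X0 Z0 + s * B"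
    using extrapolation_coupling_identity[OF extrapolation, of A x z]
    unfolding coupling_def B_def by (simp add: algebra_simps)
  have "s * B \<le> \<bar>B\<bar>" using extrapolation by auto
  moreover have "\<bar>B\<bar>
      \<le> bdist phid gphid Z Z0 / \<sigma> + bdist phip gphip X X0 / \<tau> - L * bdist phip gphip X X0"
    unfolding B_def by (rule abs_coupling_le[OF X_dom X0 Z_dom Z0])
  moreover have "gap x z X Z = real_of_ereal (f X) + real_of_ereal (h X) + z \<bullet> (A *v X)
      - real_of_ereal (conjugate g z)
      - (real_of_ereal (f x) + real_of_ereal (h x) + Z \<bullet> (A *v x) - real_of_ereal (conjugate g Z))"
    unfolding gap_def using fX fx GZ Gz h_finite[OF X_dom] h_finite[OF x_dom]
    by (simp add: real_of_ereal_lagrangian)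
  ultimately show ?thesis
    using primal dual h_descent[OF X0 X_dom x_dom] coupling_change
    unfolding energy_def inner_add_left inner_diff_right inner_minus_left add_divide_distrib
      right_diff_distrib
    by linarith
qed

lemma ergodic_gap_le:
  fixes s :: real
  assumes x_iter: "\<And>j. xs (Suc j) = bprox (\<lambda>y. ereal \<tau> * f y) phip gphip (xs j)
                                (\<tau> *\<^sub>R (transpose A *v \<zeta> j + gh (xs j)))"
    and z_iter: "\<And>j. zs (Suc j) = bprox (\<lambda>w. ereal \<sigma> * conjugate g w) phid gphid (zs j)
                                (- (\<sigma> *\<^sub>R (A *v \<xi> j)))"
    and extrapolation: "\<And>j. s = 1 \<and> \<zeta> j = zs j \<and> \<xi> j = 2 *\<^sub>R xs (Suc j) - xs j
                           \<or> s = -1 \<and> \<zeta> j = 2 *\<^sub>R zs (Suc j) - zs j \<and> \<xi> j = xs j"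
    and init: "xs 0 \<in> interior (edom phip)" "zs 0 \<in> interior (edom phid)"
    and k: "k \<ge> 1" and x: "x \<in> edom f \<inter> edom phip" and z: "z \<in> edom (conjugate g) \<inter> edom phid"
  shows "lagrangian f h g A ((1 / real k) *\<^sub>R (\<Sum>i=1..k. xs i)) z
         - lagrangian f h g A x ((1 / real k) *\<^sub>R (\<Sum>i=1..k. zs i))
         \<le> ereal (2 / real k * energy x z (xs 0) (zs 0))"
proof -
  have int: "xs j \<in> interior (edom phip) \<and> zs j \<in> interior (edom phid)" for j
  proof (induction j)
    case (Suc j)
    then show ?case
      unfolding x_iter z_iter by (simp add: primal_prox_step(1)[OF _ x] dual_prox_step(1)[OF _ z])
  qed (use init in blast)
  have "gap x z (xs (Suc j)) (zs (Suc j))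
      \<le> energy x z (xs j) (zs j) - energy x z (xs (Suc j)) (zs (Suc j))
         + s * (coupling x z (xs (Suc j)) (zs (Suc j)) - coupling x z (xs j) (zs j))" for j
    using int[of j] by (intro gap_step_le[OF _ _ x z x_iter z_iter extrapolation]) auto
  moreover have "\<bar>coupling x z (xs j) (zs j)\<bar> \<le> energy x z (xs j) (zs j)" for j
    using int[of j] x z by (intro abs_coupling_le_energy) auto
  moreover have "\<bar>s\<bar> \<le> 1" using extrapolation[of 0] by auto
  ultimately have sum_gap: "(\<Sum>i=1..k. gap x z (xs i) (zs i)) \<le> 2 * energy x z (xs 0) (zs 0)"
    by (rule telescoping_sum_le)
  have fin: "\<bar>f (xs i)\<bar> \<noteq> \<infinity> \<and> \<bar>h (xs i)\<bar> \<noteq> \<infinity> \<and> \<bar>conjugate g (zs i)\<bar> \<noteq> \<infinity>"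
    if "i \<in> {1..k}" for i
  proof -
    obtain j where i: "i = Suc j" using \<open>i \<in> {1..k}\<close> by (cases i) auto
    have "xs i \<in> edom phip" using int[of i] interior_subset by blast
    moreover have "\<bar>f (xs i)\<bar> \<noteq> \<infinity>" "\<bar>conjugate g (zs i)\<bar> \<noteq> \<infinity>"
      unfolding i x_iter z_iter using int[of j]
      by (simp_all add: primal_prox_step(2)[OF _ x] dual_prox_step(2)[OF _ z])
    ultimately show ?thesis by (simp add: h_finite)
  qed
  have "x \<in> edom phip" "\<bar>f x\<bar> \<noteq> \<infinity>" "\<bar>conjugate g z\<bar> \<noteq> \<infinity>"
    using x z f_finite conjugate_finite unfolding edom_def by auto
  moreover have "(\<Sum>i=1..k. 1 / real k) = 1" using k by simp
  ultimately have "lagrangian f h g A (\<Sum>i=1..k. (1 / real k) *\<^sub>R xs i) z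
         - lagrangian f h g A x (\<Sum>i=1..k. (1 / real k) *\<^sub>R zs i)
      \<le> ereal (\<Sum>i=1..k. 1 / real k * gap x z (xs i) (zs i))"
    unfolding gap_def using fin h_finite
    by (intro lagrangian_gap_convex_combination_le[OF f_convex h_convex fh_proper g_proper]) simp_all
  also have "\<dots> = ereal (1 / real k * (\<Sum>i=1..k. gap x z (xs i) (zs i)))"
    by (simp add: sum_distrib_left)
  also have "\<dots> \<le> ereal (2 / real k * energy x z (xs 0) (zs 0))"
    using sum_gap by (simp add: divide_right_mono)
  finally show ?thesis by (simp add: scaleR_sum_right)
qed

end

theorem mainTheorem4:
  fixes f h :: "real^'n \<Rightarrow> ereal" and g :: "real^'m \<Rightarrow> ereal"
    and A :: "real^'n^'m" and gh :: "real^'n \<Rightarrow> real^'n"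
    and phip :: "real^'n \<Rightarrow> ereal" and gphip :: "real^'n \<Rightarrow> real^'n"
    and phid :: "real^'m \<Rightarrow> ereal" and gphid :: "real^'m \<Rightarrow> real^'m"
    and np :: "real^'n \<Rightarrow> real" and nd :: "real^'m \<Rightarrow> real"
    and L \<sigma> \<tau> :: real
    and xs :: "nat \<Rightarrow> real^'n" and zs :: "nat \<Rightarrow> real^'m"
    and k :: nat and x :: "real^'n" and z :: "real^'m"
  assumes f_cc: "closed_fun f" "convex_fun f"
    and g_cc: "closed_fun g" "convex_fun g"
    and h_cc: "closed_fun h" "convex_fun h"
    and h_open: "open (edom h)"
    and h_diff: "\<forall>y\<in>edom h. h y \<noteq> -\<infinity> \<and>
                   ((\<lambda>u. real_of_ereal (h u)) has_derivative (\<lambda>v. gh y \<bullet> v)) (at y)"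
    and fh_proper: "proper_fun (\<lambda>y. f y + h y)"
    and g_proper: "proper_fun g"
    and kp: "bregman_kernel phip gphip" and kd: "bregman_kernel phid gphid"
    and proxp: "prox_wellposed (\<lambda>y. ereal \<tau> * f y) phip gphip"
    and proxd: "prox_wellposed (\<lambda>w. ereal \<sigma> * conjugate g w) phid gphid"
    and norms: "is_norm np" "is_norm nd"
    and sc_p: "\<forall>y\<in>edom phip. \<forall>y'\<in>interior (edom phip).
                 bdist phip gphip y y' \<ge> 1/2 * (np (y - y'))\<^sup>2"
    and sc_d: "\<forall>w\<in>edom phid. \<forall>w'\<in>interior (edom phid).
                 bdist phid gphid w w' \<ge> 1/2 * (nd (w - w'))\<^sup>2"
    and dom_sub: "edom phip \<subseteq> edom h"
    and L_pos: "L > 0"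
    and rel_smooth: "\<forall>y\<in>edom phip. \<forall>y'\<in>interior (edom phip).
          real_of_ereal (h y) - real_of_ereal (h y') - gh y' \<bullet> (y - y') \<le> L * bdist phip gphip y y'"
    and opt: "\<exists>xo\<in>edom phip. \<exists>zo\<in>edom phid.
          (\<exists>s\<in>subdiff f xo. s + gh xo + transpose A *v zo = 0) \<and>
          (\<exists>t\<in>subdiff (conjugate g) zo. t - A *v xo = 0)"
    and pos: "\<sigma> > 0" "\<tau> > 0"
    and step: "\<sigma> * \<tau> * (op_norm np nd A)\<^sup>2 + \<tau> * L \<le> 1"
    and init: "xs 0 \<in> interior (edom phip) \<inter> edom h" "zs 0 \<in> interior (edom phid)"
    and iter:
      "(\<forall>j. xs (Suc j) = bprox (\<lambda>y. ereal \<tau> * f y) phip gphip (xs j)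
                             (\<tau> *\<^sub>R (transpose A *v zs j) + \<tau> *\<^sub>R gh (xs j)) \<and>
            zs (Suc j) = bprox (\<lambda>w. ereal \<sigma> * conjugate g w) phid gphid (zs j)
                             (- (\<sigma> *\<^sub>R (A *v (2 *\<^sub>R xs (Suc j) - xs j)))))
       \<or>
       (\<forall>j. zs (Suc j) = bprox (\<lambda>w. ereal \<sigma> * conjugate g w) phid gphid (zs j)
                             (- (\<sigma> *\<^sub>R (A *v xs j))) \<and>
            xs (Suc j) = bprox (\<lambda>y. ereal \<tau> * f y) phip gphip (xs j)
                             (\<tau> *\<^sub>R (transpose A *v (2 *\<^sub>R zs (Suc j) - zs j)) + \<tau> *\<^sub>R gh (xs j)))"
    and k1: "k \<ge> 1"
    and x_dom: "x \<in> edom f \<inter> edom phip"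
    and z_dom: "z \<in> edom (conjugate g) \<inter> edom phid"
  shows "lagrangian f h g A ((1 / real k) *\<^sub>R (\<Sum>i=1..k. xs i)) z
         - lagrangian f h g A x ((1 / real k) *\<^sub>R (\<Sum>i=1..k. zs i))
         \<le> ereal (2 / real k * (1 / \<tau> * bdist phip gphip x (xs 0)
                                 + 1 / \<sigma> * bdist phid gphid z (zs 0)))"
proof -
  interpret bregman_condat_vu f h g A gh phip gphip phid gphid np nd L \<sigma> \<tau>
    using f_cc(2) h_cc(2) h_diff fh_proper g_proper kp kd proxp proxd norms sc_p sc_d dom_sub
      rel_smooth L_pos pos step
    by unfold_locales auto
  obtain \<zeta> \<xi> and s :: real where
    x_iter: "\<And>j. xs (Suc j) = bprox (\<lambda>y. ereal \<tau> * f y) phip gphip (xs j)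
                               (\<tau> *\<^sub>R (transpose A *v \<zeta> j + gh (xs j)))"
    and z_iter: "\<And>j. zs (Suc j) = bprox (\<lambda>w. ereal \<sigma> * conjugate g w) phid gphid (zs j)
                               (- (\<sigma> *\<^sub>R (A *v \<xi> j)))"
    and extrapolation: "\<And>j. s = 1 \<and> \<zeta> j = zs j \<and> \<xi> j = 2 *\<^sub>R xs (Suc j) - xs j
                          \<or> s = -1 \<and> \<zeta> j = 2 *\<^sub>R zs (Suc j) - zs j \<and> \<xi> j = xs j"
    using iter by (rule condat_vu_iteration_cases) blast
  have "xs 0 \<in> interior (edom phip)" using init(1) by blast
  with init(2) k1 x_dom z_dom show ?thesis
    using ergodic_gap_le[where xs=xs and zs=zs and \<zeta>=\<zeta> and \<xi>=\<xi>, OF x_iter z_iter extrapolation]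
    unfolding energy_def by simp
qed

end
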